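(* Let $n\ge 2$, let $\mathcal{L}\subset\mathbb{R}^n$ be a tame lattice with Lagrangian basis $\{\mathbf{e}_1,\dots,\mathbf{e}_n\}$, $\mathbf{v}_1=\sum_i\mathbf{e}_i$, $a:=\langle\mathbf{e}_1,\mathbf{e}_1\rangle$, $h:=-\langle\mathbf{e}_1,\mathbf{e}_2\rangle$. Let $r,s$ be integers with $0\ne|r|<n$, $m=r+sn$, and suppose $$\frac{na-1}{n^2-1}\le\left(\frac{m}{r}\right)^2\le\frac{(na-1)(n+1)}{n-1}.$$ Then $$\delta(\mathcal{L}_{\mathbf{v}_1}^{(r,s)})=\frac{((na-1)r^2+m^2)^{n/2}}{2^n n^{n/2}(a+h)^{\frac{n-1}{2}}|mr^{n-1}|}.$$
   Context: Tame lattice: a full-rank lattice $\mathcal{L}\subset\mathbb{R}^n$ with a basis $\{\mathbf{e}_1,\dots,\mathbf{e}_n\}$ (Lagrangian basis) and nonzero $\mathbf{v}_1\in\mathcal{L}\cap\mathcal{L}^*$ such that $\sum_i\mathbf{e}_i=\mathbf{v}_1$, $\langle\mathbf{e}_i,\mathbf{v}_1\rangle=1$, $\langle\mathbf{e}_i,\mathbf{e}_i\rangle=a$, $\langle\mathbf{e}_i,\mathbf{e}_j\rangle=-h$ ($i\ne j$); then $a-h(n-1)=1$. $\mathcal{L}^{(r,s)}_{\mathbf{v}_1}$ is the image of $\mathcal{L}$ under $\mathbf{x}\mapsto r\mathbf{x}+s\langle\mathbf{x},\mathbf{v}_1\rangle\mathbf{v}_1$. The center density of a full-rank lattice $\Lambda\subset\mathbb{R}^n$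 is $\delta(\Lambda)=\lambda_1(\Lambda)^n/(2^n\operatorname{vol}(\Lambda))$, where $\lambda_1$ is the minimal nonzero vector norm. *)

theory Defs
  imports "HOL-Analysis.Analysis"
begin

text \<open>Lattices in R^n are modelled in the type real^'n, with n = CARD('n).
  A lattice basis is a family of vectors indexed by 'n.\<close>

definition lattice_gen :: "('n::finite \<Rightarrow> real^'n) \<Rightarrow> (real^'n) set" where
  "lattice_gen b = {(\<Sum>i\<in>UNIV. of_int (c i) *\<^sub>R b i) | c. True}"

definition is_lattice_basis :: "(real^'n::finite) set \<Rightarrow> ('n \<Rightarrow> real^'n) \<Rightarrow> bool" where
  "is_lattice_basis L b \<longleftrightarrow> inj b \<and> independent (range b) \<and> L = lattice_gen b"

definition full_rank_lattice :: "(real^'n::finite) set \<Rightarrow> bool" where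
  "full_rank_lattice L \<longleftrightarrow> (\<exists>b. is_lattice_basis L b)"

definition dual_lattice :: "(real^'n::finite) set \<Rightarrow> (real^'n) set" where
  "dual_lattice L = {y. \<forall>x\<in>L. y \<bullet> x \<in> \<int>}"

text \<open>Covolume: |det| of the matrix whose rows form a lattice basis (independent of the basis).\<close>
definition covol :: "(real^'n::finite) set \<Rightarrow> real" where
  "covol L = (THE v. \<exists>b. is_lattice_basis L b \<and> v = \<bar>det (\<chi> i. b i)\<bar>)"

definition lambda1 :: "(real^'n::finite) set \<Rightarrow> real" where
  "lambda1 L = Inf {norm x | x. x \<in> L \<and> x \<noteq> 0}"

definition center_density :: "(real^'n::finite) set \<Rightarrow> real" where
  "center_density L = lambda1 L ^ CARD('n) / (2 ^ CARD('n) * covol L)"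

definition tame_basis :: "('n::finite \<Rightarrow> real^'n) \<Rightarrow> real \<Rightarrow> real \<Rightarrow> bool" where
  "tame_basis e a h \<longleftrightarrow>
     (let L = lattice_gen e; v1 = (\<Sum>i\<in>UNIV. e i) in
       is_lattice_basis L e \<and> v1 \<noteq> 0 \<and> v1 \<in> L \<inter> dual_lattice L \<and>
       (\<forall>i. e i \<bullet> v1 = 1) \<and> (\<forall>i. e i \<bullet> e i = a) \<and>
       (\<forall>i j. i \<noteq> j \<longrightarrow> e i \<bullet> e j = - h))"

definition rs_map :: "real \<Rightarrow> real \<Rightarrow> real^'n::finite \<Rightarrow> real^'n \<Rightarrow> real^'n" where
  "rs_map r s v x = r *\<^sub>R x + (s * (x \<bullet> v)) *\<^sub>R v"

end

theory Submission
  imports Defs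
begin

(*
  The image lattice has basis f(e_i), f = rs_map r s v1, whose Gram matrix is \<alpha> I + \<beta> J with
  \<alpha> = r^2 (a + h) and \<alpha> + n \<beta> = m^2; hence its covolume is \<alpha>^((n-1)/2) |m|.
  For a lattice vector x = \<Sum> c_i e_i put k = \<Sum> c_i and P = n \<Sum> c_i^2 - k^2 \<ge> 0; then
  n |f x|^2 = \<alpha> P + m^2 k^2.  For an integer vector c \<noteq> 0 either k = 0 and P \<ge> 2n, or P \<ge> n - 1
  and k \<noteq> 0, or k^2 \<ge> n^2.  The two bounds on (m/r)^2 say exactly \<alpha> \<le> (n+1) m^2 and
  m^2 \<le> (n+1) \<alpha>, which make \<alpha> P + m^2 k^2 \<ge> \<alpha> (n - 1) + m^2 in each case; this value is
  attained at the basis vectors, so it is n \<lambda>\<^sub>1^2.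
*)

lemma row_vec_lambda [simp]: "row i (\<chi> k. f k) = f i"
  by (simp add: row_def vec_eq_iff)

lemma rows_vec_lambda_row [simp]: "(\<chi> i. row i A) = A"
  by (simp add: row_def vec_eq_iff)

lemma det_add_row_to_rows:
  fixes A :: "real^'n::finite^'n"
  assumes "finite S" "j \<notin> S"
  shows "det (\<chi> i. if i \<in> S then row i A + row j A else row i A) = det A"
  using assms
proof (induction S rule: finite_induct)
  case empty
  then show ?case by simp
next
  case (insert x S)
  let ?B = "\<chi> i. if i \<in> S then row i A + row j A else row i A"
  have "(\<chi> i. if i \<in> insert x S then row i A + row j A else row i A)
      = (\<chi> k. if k = x then row x ?B + row j ?B else row k ?B)"
    using insert by (auto simp: vec_eq_iff)
  also have "det \<dots> = det ?B"
  proof (rule det_row_span)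
    show "row j ?B \<in> vec.span {row k ?B |k. k \<noteq> x}"
      using insert by (intro vec.span_base) auto
  qed
  finally show ?case using insert by simp
qed

lemma det_diagonal_with_const_row:
  fixes \<alpha> \<beta> :: real
  assumes "\<alpha> \<noteq> 0"
  shows "det (\<chi> i. if i = j then \<beta> *\<^sub>R (\<chi> k. 1) else \<alpha> *\<^sub>R axis i 1 :: real^'n::finite^'n)
    = \<alpha> ^ (CARD('n) - 1) * \<beta>"
proof -
  let ?D = "\<chi> i. if i = j then \<beta> *\<^sub>R axis j 1 else \<alpha> *\<^sub>R axis i 1 :: real^'n^'n"
  let ?x = "\<Sum>k\<in>UNIV-{j}. \<beta> *\<^sub>R axis k (1::real) :: real^'n"
  have "\<beta> *\<^sub>R (\<chi> k. 1) = (\<Sum>k\<in>UNIV. \<beta> *\<^sub>R axis k (1::real) :: real^'n)"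
    by (simp add: vec_eq_iff axis_def sum_component if_distrib[of "\<lambda>t. \<beta> * t"] cong: if_cong)
  also have "\<dots> = \<beta> *\<^sub>R axis j 1 + ?x"
    by (subst sum.remove[of UNIV j]) auto
  finally have "(\<chi> i. if i = j then \<beta> *\<^sub>R (\<chi> k. 1) else \<alpha> *\<^sub>R axis i 1 :: real^'n^'n)
      = (\<chi> i. if i = j then row j ?D + ?x else row i ?D)"
    by (auto simp: vec_eq_iff)
  also have "det \<dots> = det ?D"
  proof (rule det_row_span)
    have "?x = (\<Sum>k\<in>UNIV-{j}. (\<beta> / \<alpha>) *\<^sub>R row k ?D)"
      using assms by (intro sum.cong) auto
    also have "\<dots> \<in> span {row k ?D |k. k \<noteq> j}"
      by (intro span_sum span_scale span_base) auto
    finally show "?x \<in> vec.span {row k ?D |k. k \<noteq> j}"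
      by (simp add: span_vec_eq)
  qed
  also have "\<dots> = (\<Prod>i\<in>UNIV. if i = j then \<beta> else \<alpha>)"
    by (subst det_diagonal) (auto simp: axis_def intro!: prod.cong)
  also have "\<dots> = \<alpha> ^ (CARD('n) - 1) * \<beta>"
    by (simp add: prod.remove[of UNIV j] card_Diff_singleton mult.commute)
  finally show ?thesis .
qed

lemma det_diagonal_plus_const_rows:
  fixes \<alpha> \<beta> :: real
  assumes "\<alpha> \<noteq> 0" and "finite S"
  shows "det (\<chi> i. \<alpha> *\<^sub>R axis i 1 + (if i \<in> S then \<beta> *\<^sub>R (\<chi> k. 1) else 0) :: real^'n::finite^'n)
     = \<alpha> ^ CARD('n) + of_nat (card S) * \<alpha> ^ (CARD('n) - 1) * \<beta>"
  using \<open>finite S\<close>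
proof (induction S rule: finite_induct)
  case empty
  have "det (\<chi> i. \<alpha> *\<^sub>R axis i 1 :: real^'n^'n) = (\<Prod>i\<in>(UNIV::'n set). \<alpha>)"
    by (subst det_diagonal) (auto simp: axis_def)
  then show ?case by simp
next
  case (insert j S)
  let ?M = "\<chi> i. \<alpha> *\<^sub>R axis i 1 + (if i \<in> S then \<beta> *\<^sub>R (\<chi> k. 1) else 0) :: real^'n^'n"
  let ?N = "\<chi> i. if i = j then \<beta> *\<^sub>R (\<chi> k. 1) else \<alpha> *\<^sub>R axis i 1 :: real^'n^'n"
  have split: "(\<chi> i. \<alpha> *\<^sub>R axis i 1 + (if i \<in> insert j S then \<beta> *\<^sub>R (\<chi> k. 1) else 0) :: real^'n^'n)
     = (\<chi> i. if i = j then \<alpha> *\<^sub>R axis j 1 + \<beta> *\<^sub>R (\<chi> k. 1) else row i ?M)"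
    using insert by (auto simp: vec_eq_iff)
  have M: "(\<chi> i. if i = j then \<alpha> *\<^sub>R axis j 1 else row i ?M) = ?M"
    using insert by (auto simp: vec_eq_iff)
  have N: "(\<chi> i. if i = j then \<beta> *\<^sub>R (\<chi> k. 1) else row i ?M)
      = (\<chi> i. if i \<in> S then row i ?N + row j ?N else row i ?N)"
    using insert by (auto simp: vec_eq_iff)
  txt \<open>Split row \<open>j\<close> by linearity; in the second summand that row is \<open>\<beta> *\<^sub>R 1\<close>,
    which can then be subtracted from the rows indexed by \<open>S\<close>.\<close>
  show ?case
    unfolding split det_row_add M N det_add_row_to_rows[OF insert(1,2)]
      det_diagonal_with_const_row[OF assms(1)] insert(3)
    using insert by (simp add: algebra_simps)
qed

lemma det_scalar_plus_const:
  fixes \<alpha> \<beta> :: real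
  assumes "\<alpha> \<noteq> 0"
  shows "det (\<chi> i j. (if i = j then \<alpha> else 0) + \<beta> :: real^'n::finite^'n)
     = \<alpha> ^ (CARD('n) - 1) * (\<alpha> + of_nat CARD('n) * \<beta>)"
proof -
  have "(\<chi> i j. (if i = j then \<alpha> else 0) + \<beta> :: real^'n^'n)
      = (\<chi> i. \<alpha> *\<^sub>R axis i 1 + (if i \<in> UNIV then \<beta> *\<^sub>R (\<chi> k. 1) else 0))"
    by (auto simp: vec_eq_iff axis_def)
  moreover have "\<alpha> ^ CARD('n) = \<alpha> ^ (CARD('n) - 1) * \<alpha>"
    by (simp flip: power_Suc2)
  ultimately show ?thesis
    using det_diagonal_plus_const_rows[OF assms, of "UNIV::'n set" \<beta>] by (simp add: algebra_simps)
qed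

lemma lattice_gen_mem: "(\<Sum>i\<in>UNIV. of_int (c i) *\<^sub>R b i) \<in> lattice_gen b"
  unfolding lattice_gen_def by blast

lemma basis_in_lattice_gen: "b i \<in> lattice_gen b"
proof -
  have "(\<Sum>j\<in>UNIV. of_int (if j = i then 1 else 0) *\<^sub>R b j) = (\<Sum>j\<in>UNIV. if j = i then b j else 0)"
    by (rule sum.cong) auto
  then show ?thesis
    using lattice_gen_mem[of "\<lambda>j. if j = i then 1 else 0" b] by simp
qed

lemma lattice_gen_linear_image:
  assumes "linear f"
  shows "f ` lattice_gen b = lattice_gen (\<lambda>i. f (b i))"
proof -
  have image: "f (\<Sum>i\<in>UNIV. of_int (c i) *\<^sub>R b i) = (\<Sum>i\<in>UNIV. of_int (c i) *\<^sub>R f (b i))" for c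
    by (simp add: linear_sum[OF assms] linear_scale[OF assms])
  show ?thesis
  proof
    show "f ` lattice_gen b \<subseteq> lattice_gen (\<lambda>i. f (b i))"
      unfolding lattice_gen_def using image by auto
    show "lattice_gen (\<lambda>i. f (b i)) \<subseteq> f ` lattice_gen b"
      unfolding lattice_gen_def using image by (auto intro!: image_eqI)
  qed
qed

lemma lattice_gen_change_of_basis:
  fixes x b :: "'n::finite \<Rightarrow> real^'n"
  assumes "\<And>i. x i \<in> lattice_gen b"
  obtains C :: "'n \<Rightarrow> 'n \<Rightarrow> int"
  where "(\<chi> i. x i) = (\<chi> i j. real_of_int (C i j)) ** (\<chi> i. b i)"
proof -
  have "\<forall>i. \<exists>c. x i = (\<Sum>j\<in>UNIV. of_int (c j) *\<^sub>R b j)"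
    using assms unfolding lattice_gen_def by blast
  then obtain C where C: "\<And>i. x i = (\<Sum>j\<in>UNIV. of_int (C i j) *\<^sub>R b j)"
    by metis
  have "(\<chi> i. x i) = (\<chi> i j. real_of_int (C i j)) ** (\<chi> i. b i)"
    by (simp add: vec_eq_iff matrix_matrix_mult_def C sum_component)
  then show ?thesis by (rule that)
qed

lemma det_of_int_matrix_in_Ints: "det (\<chi> i j. real_of_int (C i j) :: real^'n::finite^'n) \<in> \<int>"
  unfolding det_def by (intro Ints_sum Ints_mult Ints_prod) auto

text \<open>Two bases of the same lattice differ by unimodular integer matrices.\<close>
lemma abs_det_eq_if_lattice_gen_eq:
  fixes b b' :: "'n::finite \<Rightarrow> real^'n"
  assumes eq: "lattice_gen b = lattice_gen b'" and nz: "det (\<chi> i. b' i) \<noteq> 0"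
  shows "\<bar>det (\<chi> i. b i)\<bar> = \<bar>det (\<chi> i. b' i)\<bar>"
proof -
  obtain C where C: "(\<chi> i. b i) = (\<chi> i j. real_of_int (C i j)) ** (\<chi> i. b' i)"
    using lattice_gen_change_of_basis[of b b'] basis_in_lattice_gen eq by metis
  obtain D where D: "(\<chi> i. b' i) = (\<chi> i j. real_of_int (D i j)) ** (\<chi> i. b i)"
    using lattice_gen_change_of_basis[of b' b] basis_in_lattice_gen eq by metis
  define dC where "dC = det (\<chi> i j. real_of_int (C i j) :: real^'n^'n)"
  define dD where "dD = det (\<chi> i j. real_of_int (D i j) :: real^'n^'n)"
  have dC: "det (\<chi> i. b i) = dC * det (\<chi> i. b' i)"
    unfolding dC_def by (subst C) (simp add: det_mul)
  have "det (\<chi> i. b' i) = dD * det (\<chi> i. b i)"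
    unfolding dD_def by (subst D) (simp add: det_mul)
  with dC nz have "dD * dC = 1"
    by (metis mult.assoc mult_cancel_right1)
  moreover obtain x where x: "dC = of_int x"
    using det_of_int_matrix_in_Ints[of C] dC_def Ints_cases by metis
  moreover obtain y where "dD = of_int y"
    using det_of_int_matrix_in_Ints[of D] dD_def Ints_cases by metis
  ultimately have "y * x = 1"
    by (metis of_int_eq_1_iff of_int_mult)
  then have "\<bar>x\<bar> = 1"
    using zmult_eq_1_iff by auto
  then have "\<bar>dC\<bar> = 1"
    using x by (metis of_int_1 of_int_abs)
  then show ?thesis
    using dC by (simp add: abs_mult)
qed

lemma is_lattice_basis_if_det_nonzero:
  fixes b :: "'n::finite \<Rightarrow> real^'n"
  assumes nz: "det (\<chi> i. b i) \<noteq> 0"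
  shows "is_lattice_basis (lattice_gen b) b"
proof -
  have "inj b"
  proof (rule injI)
    fix i j assume "b i = b j"
    then show "i = j"
      using nz det_identical_rows[of i j "\<chi> i. b i"] by auto
  qed
  moreover have "rows (\<chi> i. b i) = range b"
    by (auto simp: rows_def)
  then have "independent (range b)"
    using nz det_dependent_rows[of "\<chi> i. b i"] by (auto simp: dependent_vec_eq)
  ultimately show ?thesis
    unfolding is_lattice_basis_def by simp
qed

lemma covol_lattice_gen:
  fixes b :: "'n::finite \<Rightarrow> real^'n"
  assumes "det (\<chi> i. b i) \<noteq> 0"
  shows "covol (lattice_gen b) = \<bar>det (\<chi> i. b i)\<bar>"
  unfolding covol_def
proof (rule the_equality)
  show "\<exists>b'. is_lattice_basis (lattice_gen b) b' \<and> \<bar>det (\<chi> i. b i)\<bar> = \<bar>det (\<chi> i. b' i)\<bar>"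
    using is_lattice_basis_if_det_nonzero[OF assms] by blast
next
  fix w assume "\<exists>b'. is_lattice_basis (lattice_gen b) b' \<and> w = \<bar>det (\<chi> i. b' i)\<bar>"
  then obtain b' where "lattice_gen b' = lattice_gen b" "w = \<bar>det (\<chi> i. b' i)\<bar>"
    unfolding is_lattice_basis_def by auto
  then show "w = \<bar>det (\<chi> i. b i)\<bar>"
    using abs_det_eq_if_lattice_gen_eq assms by simp
qed

lemma lambda1_eqI:
  assumes "x \<in> L" "x \<noteq> 0" and "\<And>y. y \<in> L \<Longrightarrow> y \<noteq> 0 \<Longrightarrow> norm x \<le> norm y"
  shows "lambda1 L = norm x"
  unfolding lambda1_def by (rule cInf_eq_minimum) (use assms in auto)

text \<open>Writing \<open>k = q n + t\<close> with \<open>0 \<le> t < n\<close>, the bound comes from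
  \<open>\<Sum>i. (c i - q) (c i - q - 1) \<ge> 0\<close>, as a product of two consecutive integers is nonnegative.\<close>
lemma sum_squares_gap_ge_mod:
  fixes c :: "'n::finite \<Rightarrow> int"
  defines "k \<equiv> sum c UNIV" and "n \<equiv> int CARD('n)"
  shows "(k mod n) * (n - k mod n) \<le> n * (\<Sum>i\<in>UNIV. (c i)\<^sup>2) - k\<^sup>2"
proof -
  define q where "q = k div n"
  define t where "t = k mod n"
  have k: "k = q * n + t"
    unfolding q_def t_def by simp
  have consecutive: "0 \<le> (x::int) * (x - 1)" for x
    by (cases "x \<le> 0") (auto simp: mult_nonneg_nonneg mult_nonpos_nonpos)
  have "0 \<le> (\<Sum>i\<in>UNIV. (c i - q) * (c i - q - 1))"
    by (intro sum_nonneg) (metis consecutive diff_diff_eq)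
  also have "\<dots> = (\<Sum>i\<in>UNIV. (c i)\<^sup>2) - (2 * q + 1) * k + n * q * (q + 1)"
    by (simp add: k_def n_def algebra_simps power2_eq_square sum.distrib sum_subtractf
        sum_distrib_left sum_distrib_right)
  finally have "0 \<le> n * ((\<Sum>i\<in>UNIV. (c i)\<^sup>2) - (2 * q + 1) * k + n * q * (q + 1))"
    by (simp add: n_def)
  also have "\<dots> = n * (\<Sum>i\<in>UNIV. (c i)\<^sup>2) - k\<^sup>2 - t * (n - t)"
    unfolding k by (simp add: algebra_simps power2_eq_square)
  finally show ?thesis
    unfolding t_def by simp
qed

lemma one_le_square_int: "(x::int) \<noteq> 0 \<Longrightarrow> 1 \<le> x\<^sup>2"
  using one_le_power[of "\<bar>x\<bar>" 2] by simp

lemma int_vector_square_sum_cases: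
  fixes c :: "'n::finite \<Rightarrow> int"
  defines "k \<equiv> sum c UNIV" and "n \<equiv> int CARD('n)"
  defines "P \<equiv> n * (\<Sum>i\<in>UNIV. (c i)\<^sup>2) - k\<^sup>2"
  assumes "\<exists>i. c i \<noteq> 0"
  shows "k = 0 \<and> 2 * n \<le> P \<or> 1 \<le> k\<^sup>2 \<and> n - 1 \<le> P \<or> n\<^sup>2 \<le> k\<^sup>2 \<and> 0 \<le> P"
proof -
  have n: "0 < n"
    by (simp add: n_def)
  have gap: "(k mod n) * (n - k mod n) \<le> P"
    unfolding P_def k_def n_def by (rule sum_squares_gap_ge_mod)
  obtain i where i: "c i \<noteq> 0"
    using assms(4) by auto
  consider "k = 0" | "k \<noteq> 0" "k mod n = 0" | "k mod n \<noteq> 0"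
    by blast
  then show ?thesis
  proof cases
    case 1
    then have "(\<Sum>j\<in>UNIV-{i}. c j) = - c i"
      using sum.remove[of UNIV i c] by (simp add: k_def)
    then obtain j where j: "j \<noteq> i" "c j \<noteq> 0"
      using i by (metis DiffD2 insertI1 neg_equal_0_iff_equal sum.neutral)
    have "1 \<le> (c i)\<^sup>2" "1 \<le> (c j)\<^sup>2"
      using i j by (simp_all add: one_le_square_int)
    moreover have "(\<Sum>x\<in>{i, j}. (c x)\<^sup>2) \<le> (\<Sum>x\<in>UNIV. (c x)\<^sup>2)"
      by (intro sum_mono2) auto
    ultimately have "2 \<le> (\<Sum>x\<in>UNIV. (c x)\<^sup>2)"
      using j by simp
    then show ?thesis
      using 1 n by (simp add: P_def)
  next
    case 2
    then obtain q where "k = n * q" "q \<noteq> 0"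
      by (metis mod_eq_0_iff_dvd dvd_def mult_zero_right)
    then have "n\<^sup>2 * 1 \<le> n\<^sup>2 * q\<^sup>2"
      using one_le_square_int by (intro mult_left_mono) auto
    then have "n\<^sup>2 \<le> k\<^sup>2"
      using \<open>k = n * q\<close> by (simp add: power_mult_distrib)
    then show ?thesis
      using gap 2 by simp
  next
    case 3
    have "0 \<le> k mod n" "k mod n < n"
      using n by simp_all
    with 3 have "0 \<le> (k mod n - 1) * (n - k mod n - 1)"
      by simp
    then have "n - 1 \<le> P"
      using gap by (simp add: algebra_simps)
    moreover have "k \<noteq> 0"
      using 3 by auto
    ultimately show ?thesis
      by (simp add: one_le_square_int)
  qed
qed

lemma scaled_norm_lower_bound:
  fixes \<alpha> \<mu> n P K :: real
  assumes "1 \<le> n" "0 \<le> \<alpha>" "0 \<le> \<mu>" "\<alpha> \<le> (n + 1) * \<mu>" "\<mu> \<le> (n + 1) * \<alpha>"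
    and "K = 0 \<and> 2 * n \<le> P \<or> 1 \<le> K \<and> n - 1 \<le> P \<or> n\<^sup>2 \<le> K \<and> 0 \<le> P"
  shows "\<alpha> * (n - 1) + \<mu> \<le> \<alpha> * P + \<mu> * K"
  using assms(6)
proof (elim disjE conjE)
  assume "K = 0" "2 * n \<le> P"
  then show ?thesis
    using assms(1-5) mult_left_mono[of "2 * n" P \<alpha>] by (simp add: algebra_simps)
next
  assume "1 \<le> K" "n - 1 \<le> P"
  then show ?thesis
    using assms(2,3) mult_left_mono[of "n - 1" P \<alpha>] mult_left_mono[of 1 K \<mu>] by simp
next
  assume K: "n\<^sup>2 \<le> K" and P: "0 \<le> P"
  have "\<alpha> * (n - 1) \<le> n\<^sup>2 * \<mu> - \<mu>"
    using assms(1,4) mult_left_mono[of \<alpha> "(n + 1) * \<mu>" "n - 1"]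
    by (simp add: power2_eq_square algebra_simps)
  moreover have "n\<^sup>2 * \<mu> \<le> \<mu> * K"
    using mult_left_mono[OF K assms(3)] by (simp add: mult.commute)
  moreover have "0 \<le> \<alpha> * P"
    using P assms(2) by simp
  ultimately show ?thesis
    by linarith
qed

lemma abs_eq_of_square_eq:
  fixes d x y b :: real
  assumes "d\<^sup>2 = (x\<^sup>2 * b) ^ k * y\<^sup>2" and "0 < b"
  shows "\<bar>d\<bar> = b powr (real k / 2) * \<bar>y * x ^ k\<bar>"
proof -
  have "(b powr (real k / 2))\<^sup>2 = b ^ k"
    using assms(2) by (simp add: powr_power powr_realpow)
  then have "\<bar>d\<bar>\<^sup>2 = (b powr (real k / 2) * \<bar>y * x ^ k\<bar>)\<^sup>2"
    using assms(1) by (simp add: power_mult_distrib power_mult[symmetric] mult.commute)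
  then have "\<bar>d\<bar> = \<bar>b powr (real k / 2) * \<bar>y * x ^ k\<bar>\<bar>"
    by (metis real_sqrt_abs power2_abs)
  then show ?thesis
    by simp
qed

lemma real_sqrt_power_eq_powr: "0 < x \<Longrightarrow> sqrt x ^ k = x powr (real k / 2)"
  by (simp add: powr_half_sqrt[symmetric] powr_power)

lemma linear_rs_map: "linear (rs_map r s v)"
  by (rule linearI) (simp_all add: rs_map_def algebra_simps)

lemma inner_rs_map:
  "rs_map r s v x \<bullet> rs_map r s v y
     = r\<^sup>2 * (x \<bullet> y) + (2 * r * s + s\<^sup>2 * (v \<bullet> v)) * (x \<bullet> v) * (y \<bullet> v)"
  by (simp add: rs_map_def inner_add_left inner_add_right inner_commute algebra_simps
      power2_eq_square)

locale tame_lattice =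
  fixes e :: "'n::finite \<Rightarrow> real^'n" and a h :: real
  assumes tame: "tame_basis e a h"
begin

abbreviation v1 :: "real^'n" where "v1 \<equiv> \<Sum>i\<in>UNIV. e i"

lemma inner_basis: "e i \<bullet> e j = (if i = j then a + h else 0) - h"
  using tame unfolding tame_basis_def Let_def by auto

lemma inner_basis_v1: "e i \<bullet> v1 = 1"
  using tame unfolding tame_basis_def Let_def by auto

lemma inner_v1_v1: "v1 \<bullet> v1 = real CARD('n)"
  by (simp add: inner_sum_left inner_basis_v1)

lemma a_eq: "a = 1 + (real CARD('n) - 1) * h"
proof -
  obtain i :: 'n where True by simp
  have "1 = (\<Sum>j\<in>UNIV. e i \<bullet> e j)"
    using inner_basis_v1[of i] by (simp add: inner_sum_right)
  also have "\<dots> = (\<Sum>j\<in>UNIV. (if j = i then a + h else 0) - h)"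
    by (intro sum.cong) (auto simp: inner_basis)
  also have "\<dots> = a + h - real CARD('n) * h"
    by (simp add: sum_subtractf)
  finally show ?thesis
    by (simp add: algebra_simps)
qed

lemma n_a_minus_one: "real CARD('n) * a - 1 = (real CARD('n) - 1) * (a + h)"
  by (subst (1 2) a_eq) (simp add: algebra_simps)

lemma scaled_bounds_of_ratio_bounds:
  assumes "CARD('n) \<ge> 2" and "R \<noteq> 0"
    and "(real CARD('n) * a - 1) / (real CARD('n) ^ 2 - 1) \<le> (M / R) ^ 2"
    and "(M / R) ^ 2 \<le> (real CARD('n) * a - 1) * (real CARD('n) + 1) / (real CARD('n) - 1)"
  shows "R\<^sup>2 * (a + h) \<le> (real CARD('n) + 1) * M\<^sup>2"
    and "M\<^sup>2 \<le> (real CARD('n) + 1) * (R\<^sup>2 * (a + h))"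
proof -
  have n: "2 \<le> real CARD('n)"
    using assms(1) by simp
  have "real CARD('n) ^ 2 - 1 = (real CARD('n) - 1) * (real CARD('n) + 1)"
    by (simp add: power2_eq_square algebra_simps)
  then have "(a + h) / (real CARD('n) + 1) \<le> (M / R)\<^sup>2"
    using assms(3) n unfolding n_a_minus_one by simp
  then show "R\<^sup>2 * (a + h) \<le> (real CARD('n) + 1) * M\<^sup>2"
    using assms(2) n by (simp add: power_divide field_simps)
  have "(M / R)\<^sup>2 \<le> (a + h) * (real CARD('n) + 1)"
    using assms(4) n unfolding n_a_minus_one by simp
  then show "M\<^sup>2 \<le> (real CARD('n) + 1) * (R\<^sup>2 * (a + h))"
    using assms(2) by (simp add: power_divide field_simps)
qed

lemma a_plus_h_pos:
  assumes "CARD('n) \<ge> 2"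
  shows "0 < a + h"
proof -
  obtain i j :: 'n where "i \<noteq> j"
    using assms card_le_Suc0_iff_eq[of "UNIV::'n set"] by fastforce
  moreover have "inj e"
    using tame unfolding tame_basis_def Let_def is_lattice_basis_def by simp
  ultimately have "0 < (e i - e j) \<bullet> (e i - e j)"
    by (simp add: inj_eq)
  also have "\<dots> = 2 * (a + h)"
    using \<open>i \<noteq> j\<close> by (simp add: inner_diff_left inner_diff_right inner_basis inner_commute)
  finally show ?thesis
    by simp
qed

text \<open>Orthogonal decomposition along \<open>v1\<close>:
  \<open>n \<parallel>x\<parallel>\<^sup>2 = (x \<bullet> v1)\<^sup>2 + n \<parallel>x\<^sub>\<bottom>\<parallel>\<^sup>2\<close>.\<close>
lemma norm_basis_combination:
  fixes c :: "'n \<Rightarrow> real"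
  defines "x \<equiv> \<Sum>i\<in>UNIV. c i *\<^sub>R e i"
  shows "x \<bullet> v1 = sum c UNIV"
    and "real CARD('n) * (norm x)\<^sup>2
      = (a + h) * (real CARD('n) * (\<Sum>i\<in>UNIV. (c i)\<^sup>2) - (sum c UNIV)\<^sup>2) + (sum c UNIV)\<^sup>2"
proof -
  show "x \<bullet> v1 = sum c UNIV"
    by (simp add: x_def inner_sum_left inner_basis_v1)
  have x_e: "x \<bullet> e j = (a + h) * c j - h * sum c UNIV" for j
  proof -
    have "x \<bullet> e j = (\<Sum>i\<in>UNIV. c i * ((if i = j then a + h else 0) - h))"
      by (simp add: x_def inner_sum_left inner_basis)
    also have "\<dots> = (\<Sum>i\<in>UNIV. (if i = j then (a + h) * c i else 0) - h * c i)"
      by (intro sum.cong) (auto simp: algebra_simps)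
    finally show ?thesis
      by (simp add: sum_subtractf sum_distrib_left)
  qed
  have "(norm x)\<^sup>2 = (\<Sum>j\<in>UNIV. c j * (x \<bullet> e j))"
    unfolding power2_norm_eq_inner by (subst (2) x_def) (simp add: inner_sum_right)
  also have "\<dots> = (\<Sum>j\<in>UNIV. (a + h) * (c j)\<^sup>2 - h * sum c UNIV * c j)"
    by (simp add: x_e algebra_simps power2_eq_square)
  also have "\<dots> = (a + h) * (\<Sum>i\<in>UNIV. (c i)\<^sup>2) - h * (sum c UNIV)\<^sup>2"
    by (simp add: sum_subtractf power2_eq_square flip: sum_distrib_left)
  finally have "real CARD('n) * (norm x)\<^sup>2
      = real CARD('n) * ((a + h) * (\<Sum>i\<in>UNIV. (c i)\<^sup>2) - h * (sum c UNIV)\<^sup>2)"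
    by simp
  also have "\<dots> = (a + h) * (real CARD('n) * (\<Sum>i\<in>UNIV. (c i)\<^sup>2) - (sum c UNIV)\<^sup>2) + (sum c UNIV)\<^sup>2"
    using a_eq by (simp add: algebra_simps)
  finally show "real CARD('n) * (norm x)\<^sup>2
      = (a + h) * (real CARD('n) * (\<Sum>i\<in>UNIV. (c i)\<^sup>2) - (sum c UNIV)\<^sup>2) + (sum c UNIV)\<^sup>2" .
qed

lemma inner_rs_map_basis:
  "rs_map R S v1 (e i) \<bullet> rs_map R S v1 (e j)
     = (if i = j then R\<^sup>2 * (a + h) else 0) + (2 * R * S + S\<^sup>2 * real CARD('n) - R\<^sup>2 * h)"
  by (simp add: inner_rs_map inner_basis inner_basis_v1 inner_v1_v1 algebra_simps)

lemma norm_rs_map_basis_combination: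
  fixes c :: "'n \<Rightarrow> real"
  shows "real CARD('n) * (norm (rs_map R S v1 (\<Sum>i\<in>UNIV. c i *\<^sub>R e i)))\<^sup>2
    = R\<^sup>2 * (a + h) * (real CARD('n) * (\<Sum>i\<in>UNIV. (c i)\<^sup>2) - (sum c UNIV)\<^sup>2)
      + (R + S * real CARD('n))\<^sup>2 * (sum c UNIV)\<^sup>2"
proof -
  define x where "x = (\<Sum>i\<in>UNIV. c i *\<^sub>R e i)"
  have "(norm (rs_map R S v1 x))\<^sup>2
      = R\<^sup>2 * (norm x)\<^sup>2 + (2 * R * S + S\<^sup>2 * real CARD('n)) * (x \<bullet> v1)\<^sup>2"
    unfolding power2_norm_eq_inner inner_rs_map inner_v1_v1 by (simp add: power2_eq_square)
  then have "real CARD('n) * (norm (rs_map R S v1 x))\<^sup>2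
      = R\<^sup>2 * (real CARD('n) * (norm x)\<^sup>2)
        + real CARD('n) * (2 * R * S + S\<^sup>2 * real CARD('n)) * (x \<bullet> v1)\<^sup>2"
    by (simp add: algebra_simps)
  also have "\<dots> = R\<^sup>2 * (a + h) * (real CARD('n) * (\<Sum>i\<in>UNIV. (c i)\<^sup>2) - (sum c UNIV)\<^sup>2)
      + (R + S * real CARD('n))\<^sup>2 * (sum c UNIV)\<^sup>2"
    unfolding x_def norm_basis_combination by (simp add: algebra_simps power2_eq_square)
  finally show ?thesis
    unfolding x_def .
qed

text \<open>The Gram matrix of the image basis is \<open>\<alpha> I + \<beta> J\<close>, with
  \<open>\<alpha> + n \<beta> = (R + S n)\<^sup>2\<close>.\<close>
lemma det_rs_map_basis_square:
  assumes "R\<^sup>2 * (a + h) \<noteq> 0"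
  shows "(det (\<chi> i. rs_map R S v1 (e i)))\<^sup>2
    = (R\<^sup>2 * (a + h)) ^ (CARD('n) - 1) * (R + S * real CARD('n))\<^sup>2"
proof -
  let ?E = "\<chi> i. rs_map R S v1 (e i)"
  have "(det ?E)\<^sup>2 = det (?E ** transpose ?E)"
    by (simp add: det_mul det_transpose power2_eq_square)
  also have "?E ** transpose ?E = (\<chi> i j. (if i = j then R\<^sup>2 * (a + h) else 0)
      + (2 * R * S + S\<^sup>2 * real CARD('n) - R\<^sup>2 * h))"
    by (simp add: vec_eq_iff matrix_matrix_mult_def transpose_def inner_vec_def
        flip: inner_rs_map_basis)
  also have "det \<dots> = (R\<^sup>2 * (a + h)) ^ (CARD('n) - 1)
      * (R\<^sup>2 * (a + h) + real CARD('n) * (2 * R * S + S\<^sup>2 * real CARD('n) - R\<^sup>2 * h))"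
    using assms by (rule det_scalar_plus_const)
  also have "R\<^sup>2 * (a + h) + real CARD('n) * (2 * R * S + S\<^sup>2 * real CARD('n) - R\<^sup>2 * h)
      = (R + S * real CARD('n))\<^sup>2"
    using a_eq by (simp add: algebra_simps power2_eq_square)
  finally show ?thesis .
qed

lemma covol_rs_map_image:
  assumes "CARD('n) \<ge> 2" and "R \<noteq> 0" and "R + S * real CARD('n) \<noteq> 0"
  shows "covol (rs_map R S v1 ` lattice_gen e)
    = (a + h) powr ((real CARD('n) - 1) / 2) * \<bar>(R + S * real CARD('n)) * R ^ (CARD('n) - 1)\<bar>"
proof -
  have "0 < a + h"
    using assms(1) by (rule a_plus_h_pos)
  then have det_sq: "(det (\<chi> i. rs_map R S v1 (e i)))\<^sup>2
      = (R\<^sup>2 * (a + h)) ^ (CARD('n) - 1) * (R + S * real CARD('n))\<^sup>2"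
    using assms(2) by (intro det_rs_map_basis_square) simp
  then have "det (\<chi> i. rs_map R S v1 (e i)) \<noteq> 0"
    using assms(2,3) \<open>0 < a + h\<close> by auto
  then have "covol (rs_map R S v1 ` lattice_gen e) = \<bar>det (\<chi> i. rs_map R S v1 (e i))\<bar>"
    by (simp add: lattice_gen_linear_image[OF linear_rs_map] covol_lattice_gen)
  also have "\<dots> = (a + h) powr (real (CARD('n) - 1) / 2)
      * \<bar>(R + S * real CARD('n)) * R ^ (CARD('n) - 1)\<bar>"
    using det_sq \<open>0 < a + h\<close> by (rule abs_eq_of_square_eq)
  finally show ?thesis
    by (simp add: of_nat_diff)
qed

lemma lambda1_rs_map_image:
  assumes "CARD('n) \<ge> 2" and "R \<noteq> 0"
    and "R\<^sup>2 * (a + h) \<le> (real CARD('n) + 1) * (R + S * real CARD('n))\<^sup>2"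
    and "(R + S * real CARD('n))\<^sup>2 \<le> (real CARD('n) + 1) * (R\<^sup>2 * (a + h))"
  shows "lambda1 (rs_map R S v1 ` lattice_gen e)
    = sqrt (((real CARD('n) * a - 1) * R\<^sup>2 + (R + S * real CARD('n))\<^sup>2) / real CARD('n))"
proof -
  let ?f = "rs_map R S v1" and ?n = "real CARD('n)"
  let ?\<alpha> = "R\<^sup>2 * (a + h)" and ?\<mu> = "(R + S * ?n)\<^sup>2"
  have n: "2 \<le> ?n"
    using assms(1) by simp
  have "0 < a + h"
    using assms(1) by (rule a_plus_h_pos)
  then have \<alpha>: "0 < ?\<alpha>"
    using assms(2) by simp
  obtain i :: 'n where True by simp
  have "(norm (?f (e i)))\<^sup>2 = ?\<alpha> + (2 * R * S + S\<^sup>2 * ?n - R\<^sup>2 * h)"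
    unfolding power2_norm_eq_inner inner_rs_map_basis by simp
  then have "?n * (norm (?f (e i)))\<^sup>2 = R\<^sup>2 * (?n * a - 1) + ?\<mu>"
    by (simp add: algebra_simps power2_eq_square)
  then have norm_min: "?n * (norm (?f (e i)))\<^sup>2 = ?\<alpha> * (?n - 1) + ?\<mu>"
    by (simp add: n_a_minus_one)
  have "lambda1 (?f ` lattice_gen e) = norm (?f (e i))"
  proof (rule lambda1_eqI)
    show "?f (e i) \<in> ?f ` lattice_gen e"
      by (simp add: basis_in_lattice_gen)
    have "0 < ?\<alpha> * (?n - 1) + ?\<mu>"
      using \<alpha> n by (simp add: add_pos_nonneg)
    then show "?f (e i) \<noteq> 0"
      using norm_min by auto
  next
    fix y assume "y \<in> ?f ` lattice_gen e" "y \<noteq> 0"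
    then obtain c :: "'n \<Rightarrow> int" where y: "y = ?f (\<Sum>i\<in>UNIV. real_of_int (c i) *\<^sub>R e i)"
      unfolding lattice_gen_def by auto
    have "\<exists>i. c i \<noteq> 0"
    proof (rule ccontr)
      assume "\<nexists>i. c i \<noteq> 0"
      then show False
        using \<open>y \<noteq> 0\<close> y by (simp add: rs_map_def)
    qed
    define k where "k = sum c UNIV"
    define P where "P = int CARD('n) * (\<Sum>i\<in>UNIV. (c i)\<^sup>2) - k\<^sup>2"
    have cases: "k = 0 \<and> 2 * int CARD('n) \<le> P \<or> 1 \<le> k\<^sup>2 \<and> int CARD('n) - 1 \<le> P
        \<or> (int CARD('n))\<^sup>2 \<le> k\<^sup>2 \<and> 0 \<le> P"
      using int_vector_square_sum_cases[OF \<open>\<exists>i. c i \<noteq> 0\<close>] unfolding k_def P_def .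
    have of_int_mono: "x \<le> z \<Longrightarrow> real_of_int x \<le> real_of_int z" for x z
      by simp
    have "?\<alpha> * (?n - 1) + ?\<mu> \<le> ?\<alpha> * real_of_int P + ?\<mu> * real_of_int (k\<^sup>2)"
    proof (rule scaled_norm_lower_bound)
      show "real_of_int (k\<^sup>2) = 0 \<and> 2 * ?n \<le> real_of_int P
          \<or> 1 \<le> real_of_int (k\<^sup>2) \<and> ?n - 1 \<le> real_of_int P
          \<or> ?n\<^sup>2 \<le> real_of_int (k\<^sup>2) \<and> 0 \<le> real_of_int P"
        using cases of_int_mono[of "2 * int CARD('n)" P] of_int_mono[of 1 "k\<^sup>2"]
          of_int_mono[of "int CARD('n) - 1" P] of_int_mono[of "(int CARD('n))\<^sup>2" "k\<^sup>2"]
          of_int_mono[of 0 P]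
        by auto
    qed (use n \<alpha> assms(3,4) in auto)
    also have "\<dots> = ?n * (norm y)\<^sup>2"
      using norm_rs_map_basis_combination[of R S "\<lambda>i. real_of_int (c i)"]
      by (simp add: y P_def k_def)
    finally have "?n * (norm (?f (e i)))\<^sup>2 \<le> ?n * (norm y)\<^sup>2"
      using norm_min by simp
    then show "norm (?f (e i)) \<le> norm y"
      using n by (simp add: mult_le_cancel_left_pos)
  qed
  also have "\<dots> = sqrt ((?\<alpha> * (?n - 1) + ?\<mu>) / ?n)"
    using norm_min n by (simp add: real_sqrt_unique eq_divide_eq mult.commute)
  also have "?\<alpha> * (?n - 1) = (?n * a - 1) * R\<^sup>2"
    unfolding n_a_minus_one by (simp add: mult_ac)
  finally show ?thesis .
qed

lemma center_density_rs_map_image: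
  assumes "CARD('n) \<ge> 2" and "R \<noteq> 0"
    and lower: "R\<^sup>2 * (a + h) \<le> (real CARD('n) + 1) * (R + S * real CARD('n))\<^sup>2"
    and upper: "(R + S * real CARD('n))\<^sup>2 \<le> (real CARD('n) + 1) * (R\<^sup>2 * (a + h))"
  shows "center_density (rs_map R S v1 ` lattice_gen e)
    = ((real CARD('n) * a - 1) * R\<^sup>2 + (R + S * real CARD('n))\<^sup>2) powr (real CARD('n) / 2)
      / (2 ^ CARD('n) * real CARD('n) powr (real CARD('n) / 2)
         * (a + h) powr ((real CARD('n) - 1) / 2) * \<bar>(R + S * real CARD('n)) * R ^ (CARD('n) - 1)\<bar>)"
proof -
  let ?n = "real CARD('n)"
  have "0 < a + h"
    using assms(1) by (rule a_plus_h_pos)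
  then have "0 < R\<^sup>2 * (a + h)"
    using assms(2) by simp
  then have "R + S * ?n \<noteq> 0"
    using lower by auto
  have "0 < (?n * a - 1) * R\<^sup>2 + (R + S * ?n)\<^sup>2"
    using assms(1,2) \<open>0 < a + h\<close> by (simp add: n_a_minus_one add_pos_nonneg)
  then have "sqrt (((?n * a - 1) * R\<^sup>2 + (R + S * ?n)\<^sup>2) / ?n) ^ CARD('n)
      = ((?n * a - 1) * R\<^sup>2 + (R + S * ?n)\<^sup>2) powr (?n / 2) / ?n powr (?n / 2)"
    by (simp add: real_sqrt_power_eq_powr powr_divide)
  then show ?thesis
    unfolding center_density_def lambda1_rs_map_image[OF assms]
      covol_rs_map_image[OF assms(1,2) \<open>R + S * ?n \<noteq> 0\<close>]
    by (simp add: mult_ac)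
qed

end

theorem mainTheorem3:
  fixes e :: "'n::finite \<Rightarrow> real^'n" and a h :: real and r s m :: int
  assumes n2: "CARD('n) \<ge> 2"
    and tame: "tame_basis e a h"
    and r_ne: "r \<noteq> 0" and r_lt: "\<bar>r\<bar> < int CARD('n)"
    and m_def: "m = r + s * int CARD('n)"
    and lo: "(real CARD('n) * a - 1) / (real CARD('n) ^ 2 - 1) \<le> (real_of_int m / real_of_int r) ^ 2"
    and hi: "(real_of_int m / real_of_int r) ^ 2 \<le> (real CARD('n) * a - 1) * (real CARD('n) + 1) / (real CARD('n) - 1)"
  shows "center_density (rs_map (real_of_int r) (real_of_int s) (\<Sum>i\<in>UNIV. e i) ` lattice_gen e)
    = ((real CARD('n) * a - 1) * (real_of_int r)^2 + (real_of_int m)^2) powr (real CARD('n) / 2)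
      / (2 ^ CARD('n) * real CARD('n) powr (real CARD('n) / 2) * (a + h) powr ((real CARD('n) - 1) / 2)
         * \<bar>real_of_int m * real_of_int r ^ (CARD('n) - 1)\<bar>)"
proof -
  interpret tame_lattice e a h
    using tame by unfold_locales
  let ?n = "real CARD('n)" and ?R = "real_of_int r" and ?S = "real_of_int s"
  have m: "real_of_int m = ?R + ?S * ?n"
    using m_def by simp
  have R: "?R \<noteq> 0"
    using r_ne by simp
  have "?R\<^sup>2 * (a + h) \<le> (?n + 1) * (?R + ?S * ?n)\<^sup>2"
    and "(?R + ?S * ?n)\<^sup>2 \<le> (?n + 1) * (?R\<^sup>2 * (a + h))"
    using scaled_bounds_of_ratio_bounds[OF n2 R lo[unfolded m] hi[unfolded m]] by simp_all
  then show ?thesis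
    unfolding m using center_density_rs_map_image[OF n2 R] by simp
qed

end
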